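(* Let $\mathcal G$ be a braided stability groupoid, $R$ a commutative ring, $V$ a $U\mathcal G$-module and $d\in\mathbb N$. If $\mathrm{coker}\,V$ is generated in ranks $\le d-1$, then $V$ is generated in ranks $\le d$.
   Context: Stability groupoid: monoidal groupoid $(\mathcal G,\oplus,0)$ with objects $(\mathbb N,+,0)$, $G_n=\mathrm{Aut}(n)$, $\oplus\colon G_m\times G_n\to G_{m+n}$ injective, $G_0$ trivial, $(G_{l+m}\times1)\cap(1\times G_{m+n})=1\times G_m\times1$ in $G_{l+m+n}$; braided: with braiding $b_{m,n}\in G_{m+n}$. $U\mathcal G$: objects $\mathbb N$, $\mathrm{Hom}(m,n)=G_n/G_{n-m}$ for $m\le n$ ($G_{n-m}\subset G_n$ via $g\mapsto g\oplus\mathrm{id}_m$), empty otherwise, composition $fG_l\circ gG_m=f(\mathrm{id}_l\oplus g)G_{l+m}$, monoidal via $f_1G_{m_1}\oplus f_2G_{m_2}=(f_1\oplus f_2)(\mathrm{id}_{m_1}\oplus b^{-1}_{n_1,m_2}\oplus\mathrm{id}_{n_2})G_{m_1+m_2}$; $0$ initial, $\iota_n\colon0\to n$. A $U\mathcal G$-module is a functor $V\colon U\mathcal G\to R\text{-Mod}$; it is generated in ranks $\le m$ if it is a quotient of $\bigoplus_jR\mathrm{Hom}(m_j,-)$ with all $m_j\le m$. $\mathrm{coker}\,V$ is the cokernel of the natural map $V\to V(1\oplus-)$ with components $V(\iota_1\oplus\mathrm{id}_n)$. *)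

theory Defs
  imports "HOL-Algebra.Algebra"
begin

section \<open>Braided stability groupoids (strict monoidal, objects = (nat,+,0))\<close>

text \<open>G n is the automorphism group Aut(n) = G_n; T m n g h is g \<oplus> h in G_(m+n);
  b m n is the braiding b_(m,n) in G_(m+n). Group product f \<otimes> g means f \<circ> g.\<close>

definition braided_stability_groupoid ::
  "(nat \<Rightarrow> 'g monoid) \<Rightarrow> (nat \<Rightarrow> nat \<Rightarrow> 'g \<Rightarrow> 'g \<Rightarrow> 'g) \<Rightarrow> (nat \<Rightarrow> nat \<Rightarrow> 'g) \<Rightarrow> bool" where
  "braided_stability_groupoid G T b \<longleftrightarrow>
     (\<forall>n. group (G n)) \<and>
     (\<forall>m n. (\<lambda>(g, h). T m n g h) \<in> hom (G m \<times>\<times> G n) (G (m + n))) \<and>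
     (\<forall>m n. inj_on (\<lambda>(g, h). T m n g h) (carrier (G m) \<times> carrier (G n))) \<and>
     carrier (G 0) = {\<one>\<^bsub>G 0\<^esub>} \<and>
     (\<forall>l m n. \<forall>f\<in>carrier (G l). \<forall>g\<in>carrier (G m). \<forall>h\<in>carrier (G n).
        T (l + m) n (T l m f g) h = T l (m + n) f (T m n g h)) \<and>
     (\<forall>n. \<forall>g\<in>carrier (G n). T 0 n \<one>\<^bsub>G 0\<^esub> g = g \<and> T n 0 g \<one>\<^bsub>G 0\<^esub> = g) \<and>
     (\<forall>l m n.
        (\<lambda>g. T (l + m) n g \<one>\<^bsub>G n\<^esub>) ` carrier (G (l + m))
        \<inter> (\<lambda>h. T l (m + n) \<one>\<^bsub>G l\<^esub> h) ` carrier (G (m + n))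
        = (\<lambda>g. T l (m + n) \<one>\<^bsub>G l\<^esub> (T m n g \<one>\<^bsub>G n\<^esub>)) ` carrier (G m)) \<and>
     (\<forall>m n. b m n \<in> carrier (G (m + n))) \<and>
     (\<forall>m n. \<forall>g\<in>carrier (G m). \<forall>h\<in>carrier (G n).
        b m n \<otimes>\<^bsub>G (m + n)\<^esub> T m n g h = T n m h g \<otimes>\<^bsub>G (m + n)\<^esub> b m n) \<and>
     (\<forall>l m n. b l (m + n) =
        T m (l + n) \<one>\<^bsub>G m\<^esub> (b l n) \<otimes>\<^bsub>G (l + m + n)\<^esub> T (l + m) n (b l m) \<one>\<^bsub>G n\<^esub>) \<and>
     (\<forall>l m n. b (l + m) n =
        T (n + l) m (b l n) \<one>\<^bsub>G m\<^esub> \<otimes>\<^bsub>G (l + m + n)\<^esub> T l (m + n) \<one>\<^bsub>G l\<^esub> (b m n))"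

definition stab :: "(nat \<Rightarrow> 'g monoid) \<Rightarrow> (nat \<Rightarrow> nat \<Rightarrow> 'g \<Rightarrow> 'g \<Rightarrow> 'g) \<Rightarrow> nat \<Rightarrow> nat \<Rightarrow> 'g set" where
  "stab G T m n = (\<lambda>g. T (n - m) m g \<one>\<^bsub>G m\<^esub>) ` carrier (G (n - m))"

definition uhom :: "(nat \<Rightarrow> 'g monoid) \<Rightarrow> (nat \<Rightarrow> nat \<Rightarrow> 'g \<Rightarrow> 'g \<Rightarrow> 'g) \<Rightarrow> nat \<Rightarrow> nat \<Rightarrow> 'g set set" where
  "uhom G T m n = (if m \<le> n then {f <#\<^bsub>G n\<^esub> stab G T m n | f. f \<in> carrier (G n)} else {})"

definition urep :: "(nat \<Rightarrow> 'g monoid) \<Rightarrow> (nat \<Rightarrow> nat \<Rightarrow> 'g \<Rightarrow> 'g \<Rightarrow> 'g) \<Rightarrow> nat \<Rightarrow> nat \<Rightarrow> 'g set \<Rightarrow> 'g" where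
  "urep G T m n \<phi> = (SOME f. f \<in> carrier (G n) \<and> \<phi> = f <#\<^bsub>G n\<^esub> stab G T m n)"

definition uid :: "(nat \<Rightarrow> 'g monoid) \<Rightarrow> (nat \<Rightarrow> nat \<Rightarrow> 'g \<Rightarrow> 'g \<Rightarrow> 'g) \<Rightarrow> nat \<Rightarrow> 'g set" where
  "uid G T n = \<one>\<^bsub>G n\<^esub> <#\<^bsub>G n\<^esub> stab G T n n"

text \<open>Composition of \<phi> : l \<rightarrow> m and \<psi> : m \<rightarrow> n:  fG_(n-m) \<circ> gG_(m-l) = f (id_(n-m) \<oplus> g) G_(n-l).\<close>
definition ucomp :: "(nat \<Rightarrow> 'g monoid) \<Rightarrow> (nat \<Rightarrow> nat \<Rightarrow> 'g \<Rightarrow> 'g \<Rightarrow> 'g) \<Rightarrow> nat \<Rightarrow> nat \<Rightarrow> nat \<Rightarrow> 'g set \<Rightarrow> 'g set \<Rightarrow> 'g set" where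
  "ucomp G T l m n \<psi> \<phi> =
     (urep G T m n \<psi> \<otimes>\<^bsub>G n\<^esub> T (n - m) m \<one>\<^bsub>G (n - m)\<^esub> (urep G T l m \<phi>)) <#\<^bsub>G n\<^esub> stab G T l n"

text \<open>Monoidal product of \<phi>1 : a1 \<rightarrow> c1 and \<phi>2 : a2 \<rightarrow> c2 (m_i = c_i - a_i, n_i = a_i):
  f1G_m1 \<oplus> f2G_m2 = (f1 \<oplus> f2)(id_m1 \<oplus> b^-1_(n1,m2) \<oplus> id_n2) G_(m1+m2).\<close>
definition utens :: "(nat \<Rightarrow> 'g monoid) \<Rightarrow> (nat \<Rightarrow> nat \<Rightarrow> 'g \<Rightarrow> 'g \<Rightarrow> 'g) \<Rightarrow> (nat \<Rightarrow> nat \<Rightarrow> 'g)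
     \<Rightarrow> nat \<Rightarrow> nat \<Rightarrow> nat \<Rightarrow> nat \<Rightarrow> 'g set \<Rightarrow> 'g set \<Rightarrow> 'g set" where
  "utens G T b a1 c1 a2 c2 \<phi>1 \<phi>2 =
     (T c1 c2 (urep G T a1 c1 \<phi>1) (urep G T a2 c2 \<phi>2) \<otimes>\<^bsub>G (c1 + c2)\<^esub>
      T ((c1 - a1) + (a1 + (c2 - a2))) a2
        (T (c1 - a1) (a1 + (c2 - a2)) \<one>\<^bsub>G (c1 - a1)\<^esub> (inv\<^bsub>G (a1 + (c2 - a2))\<^esub> (b a1 (c2 - a2))))
        \<one>\<^bsub>G a2\<^esub>)
     <#\<^bsub>G (c1 + c2)\<^esub> stab G T (a1 + a2) (c1 + c2)"

definition uiota :: "(nat \<Rightarrow> 'g monoid) \<Rightarrow> (nat \<Rightarrow> nat \<Rightarrow> 'g \<Rightarrow> 'g \<Rightarrow> 'g) \<Rightarrow> nat \<Rightarrow> 'g set" where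
  "uiota G T n = \<one>\<^bsub>G n\<^esub> <#\<^bsub>G n\<^esub> stab G T 0 n"

definition lin_map :: "('r, 'c) ring_scheme \<Rightarrow> ('r, 'a, 'd) module_scheme \<Rightarrow> ('r, 'b, 'e) module_scheme
     \<Rightarrow> ('a \<Rightarrow> 'b) \<Rightarrow> bool" where
  "lin_map R M N f \<longleftrightarrow> f \<in> carrier M \<rightarrow> carrier N \<and>
     (\<forall>x\<in>carrier M. \<forall>y\<in>carrier M. f (x \<oplus>\<^bsub>M\<^esub> y) = f x \<oplus>\<^bsub>N\<^esub> f y) \<and>
     (\<forall>r\<in>carrier R. \<forall>x\<in>carrier M. f (r \<odot>\<^bsub>M\<^esub> x) = r \<odot>\<^bsub>N\<^esub> f x)"

text \<open>A UG-module: a functor UG \<rightarrow> R-Mod, given by objects V n and actions Vm m n \<phi> for \<phi> \<in> Hom(m,n).\<close>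
definition ug_module :: "('r, 'c) ring_scheme \<Rightarrow> (nat \<Rightarrow> 'g monoid) \<Rightarrow> (nat \<Rightarrow> nat \<Rightarrow> 'g \<Rightarrow> 'g \<Rightarrow> 'g)
     \<Rightarrow> (nat \<Rightarrow> ('r, 'v) module) \<Rightarrow> (nat \<Rightarrow> nat \<Rightarrow> 'g set \<Rightarrow> 'v \<Rightarrow> 'v) \<Rightarrow> bool" where
  "ug_module R G T V Vm \<longleftrightarrow>
     (\<forall>n. module R (V n)) \<and>
     (\<forall>m n. \<forall>\<phi>\<in>uhom G T m n. lin_map R (V m) (V n) (Vm m n \<phi>)) \<and>
     (\<forall>n. \<forall>x\<in>carrier (V n). Vm n n (uid G T n) x = x) \<and>
     (\<forall>l m n. \<forall>\<phi>\<in>uhom G T l m. \<forall>\<psi>\<in>uhom G T m n. \<forall>x\<in>carrier (V l).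
        Vm l n (ucomp G T l m n \<psi> \<phi>) x = Vm m n \<psi> (Vm l m \<phi> x))"

definition free_mod :: "('r, 'c) ring_scheme \<Rightarrow> 's set \<Rightarrow> ('r, 's \<Rightarrow> 'r) module" where
  "free_mod R S =
     \<lparr>carrier = {f \<in> S \<rightarrow>\<^sub>E carrier R. finite {s \<in> S. f s \<noteq> \<zero>\<^bsub>R\<^esub>}},
      monoid.mult = (\<lambda>_ _. undefined), monoid.one = undefined,
      ring.zero = (\<lambda>s\<in>S. \<zero>\<^bsub>R\<^esub>),
      ring.add = (\<lambda>f g. \<lambda>s\<in>S. f s \<oplus>\<^bsub>R\<^esub> g s),
      module.smult = (\<lambda>r f. \<lambda>s\<in>S. r \<otimes>\<^bsub>R\<^esub> f s)\<rparr>"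

definition free_push :: "('r, 'c) ring_scheme \<Rightarrow> 's set \<Rightarrow> 't set \<Rightarrow> ('s \<Rightarrow> 't) \<Rightarrow> ('s \<Rightarrow> 'r) \<Rightarrow> ('t \<Rightarrow> 'r)" where
  "free_push R S S' h f = (\<lambda>t\<in>S'. finsum R f {s \<in> S. h s = t \<and> f s \<noteq> \<zero>\<^bsub>R\<^esub>})"

text \<open>Basis of (\<Oplus>_(j\<in>J) R Hom(m_j, -))(n).\<close>
definition gen_basis :: "(nat \<Rightarrow> 'g monoid) \<Rightarrow> (nat \<Rightarrow> nat \<Rightarrow> 'g \<Rightarrow> 'g \<Rightarrow> 'g) \<Rightarrow> 'i set \<Rightarrow> ('i \<Rightarrow> nat) \<Rightarrow> nat
     \<Rightarrow> ('i \<times> 'g set) set" where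
  "gen_basis G T J mj n = Sigma J (\<lambda>j. uhom G T (mj j) n)"

text \<open>V is generated in ranks \<le> k: V is a quotient of \<Oplus>_(j\<in>J) R Hom(m_j, -) with all m_j \<le> k,
  i.e. there is a natural transformation from that free module which is surjective in every
  rank. The index set J has type 'i (given by the first argument). k is an integer so that
  the bound -1 (generated by nothing) is expressible.\<close>
definition gen_ranks :: "'i itself \<Rightarrow> ('r, 'c) ring_scheme \<Rightarrow> (nat \<Rightarrow> 'g monoid) \<Rightarrow> (nat \<Rightarrow> nat \<Rightarrow> 'g \<Rightarrow> 'g \<Rightarrow> 'g)
     \<Rightarrow> (nat \<Rightarrow> ('r, 'v) module) \<Rightarrow> (nat \<Rightarrow> nat \<Rightarrow> 'g set \<Rightarrow> 'v \<Rightarrow> 'v) \<Rightarrow> int \<Rightarrow> bool" where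
  "gen_ranks it R G T V Vm k \<longleftrightarrow>
     (\<exists>(J :: 'i set) (mj :: 'i \<Rightarrow> nat) (\<eta> :: nat \<Rightarrow> ('i \<times> 'g set \<Rightarrow> 'r) \<Rightarrow> 'v).
        (\<forall>j\<in>J. int (mj j) \<le> k) \<and>
        (\<forall>n. lin_map R (free_mod R (gen_basis G T J mj n)) (V n) (\<eta> n) \<and>
             \<eta> n ` carrier (free_mod R (gen_basis G T J mj n)) = carrier (V n)) \<and>
        (\<forall>n n'. \<forall>\<psi>\<in>uhom G T n n'. \<forall>f\<in>carrier (free_mod R (gen_basis G T J mj n)).
           \<eta> n' (free_push R (gen_basis G T J mj n) (gen_basis G T J mj n')
                    (\<lambda>(j, \<phi>). (j, ucomp G T (mj j) n n' \<psi> \<phi>)) f)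
           = Vm n n' \<psi> (\<eta> n f)))"

text \<open>Image of V(\<iota>_1 \<oplus> id_n) : V(n) \<rightarrow> V(1+n).\<close>
definition cok_sub :: "(nat \<Rightarrow> 'g monoid) \<Rightarrow> (nat \<Rightarrow> nat \<Rightarrow> 'g \<Rightarrow> 'g \<Rightarrow> 'g) \<Rightarrow> (nat \<Rightarrow> nat \<Rightarrow> 'g)
     \<Rightarrow> (nat \<Rightarrow> ('r, 'v) module) \<Rightarrow> (nat \<Rightarrow> nat \<Rightarrow> 'g set \<Rightarrow> 'v \<Rightarrow> 'v) \<Rightarrow> nat \<Rightarrow> 'v set" where
  "cok_sub G T b V Vm n = Vm n (1 + n) (utens G T b 0 1 n n (uiota G T 1) (uid G T n)) ` carrier (V n)"

definition cok_obj :: "(nat \<Rightarrow> 'g monoid) \<Rightarrow> (nat \<Rightarrow> nat \<Rightarrow> 'g \<Rightarrow> 'g \<Rightarrow> 'g) \<Rightarrow> (nat \<Rightarrow> nat \<Rightarrow> 'g)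
     \<Rightarrow> (nat \<Rightarrow> ('r, 'v) module) \<Rightarrow> (nat \<Rightarrow> nat \<Rightarrow> 'g set \<Rightarrow> 'v \<Rightarrow> 'v) \<Rightarrow> nat \<Rightarrow> ('r, 'v set) module" where
  "cok_obj G T b V Vm n =
     \<lparr>carrier = A_RCOSETS (V (1 + n)) (cok_sub G T b V Vm n),
      monoid.mult = (\<lambda>_ _. undefined), monoid.one = undefined,
      ring.zero = cok_sub G T b V Vm n,
      ring.add = set_add (V (1 + n)),
      module.smult = (\<lambda>r C. set_add (V (1 + n)) (cok_sub G T b V Vm n) ((\<lambda>x. r \<odot>\<^bsub>V (1 + n)\<^esub> x) ` C))\<rparr>"

text \<open>Action of \<phi> : m \<rightarrow> n on coker V, induced by V(id_1 \<oplus> \<phi>).\<close>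
definition cok_mor :: "(nat \<Rightarrow> 'g monoid) \<Rightarrow> (nat \<Rightarrow> nat \<Rightarrow> 'g \<Rightarrow> 'g \<Rightarrow> 'g) \<Rightarrow> (nat \<Rightarrow> nat \<Rightarrow> 'g)
     \<Rightarrow> (nat \<Rightarrow> ('r, 'v) module) \<Rightarrow> (nat \<Rightarrow> nat \<Rightarrow> 'g set \<Rightarrow> 'v \<Rightarrow> 'v) \<Rightarrow> nat \<Rightarrow> nat \<Rightarrow> 'g set \<Rightarrow> 'v set \<Rightarrow> 'v set" where
  "cok_mor G T b V Vm m n \<phi> C =
     (\<Union>x\<in>C. a_r_coset (V (1 + n)) (cok_sub G T b V Vm n)
               (Vm (1 + m) (1 + n) (utens G T b 1 1 m n (uid G T 1) \<phi>) x))"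

end

theory Submission
  imports Defs
begin

text \<open>Let \<open>W(n) \<subseteq> V(n)\<close> be the submodule spanned by the images of all \<open>V(m)\<close> with \<open>m \<le> d\<close>
  under the maps \<open>V(\<phi>)\<close>. Then \<open>W(n) = V(n)\<close> by induction on \<open>n\<close>: this is trivial for \<open>n \<le> d\<close>,
  and for \<open>n = k + 1 > d\<close> the image of \<open>V(k)\<close> in \<open>V(k + 1)\<close> lies in \<open>W(k + 1)\<close> by induction
  and naturality, while modulo this image \<open>V(k + 1) = (coker V)(k)\<close> is spanned by the images of
  \<open>(coker V)(m)\<close>, \<open>m \<le> d - 1\<close>, under maps induced by \<open>V(id\<^sub>1 \<oplus> \<phi>)\<close>; their elements come from
  \<open>V(1 + m)\<close> with \<open>1 + m \<le> d\<close>. Finally \<open>W = V\<close> says that \<open>V\<close> is the quotient of the free module on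
  the triples \<open>(m, x, \<phi>)\<close>, \<open>m \<le> d\<close>, \<open>x \<in> V(m)\<close>, \<open>\<phi> \<in> Hom(m, n)\<close>, under \<open>(m, x, \<phi>) \<mapsto> V(\<phi>) x\<close>.\<close>

section \<open>Linear maps and free modules\<close>

lemma lin_map_closed: "lin_map R M N f \<Longrightarrow> x \<in> carrier M \<Longrightarrow> f x \<in> carrier N"
  unfolding lin_map_def by blast

lemma lin_map_add:
  "lin_map R M N f \<Longrightarrow> x \<in> carrier M \<Longrightarrow> y \<in> carrier M \<Longrightarrow> f (x \<oplus>\<^bsub>M\<^esub> y) = f x \<oplus>\<^bsub>N\<^esub> f y"
  unfolding lin_map_def by blast

lemma lin_map_smult:
  "lin_map R M N f \<Longrightarrow> r \<in> carrier R \<Longrightarrow> x \<in> carrier M \<Longrightarrow> f (r \<odot>\<^bsub>M\<^esub> x) = r \<odot>\<^bsub>N\<^esub> f x"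
  unfolding lin_map_def by blast

lemma lin_map_zero:
  assumes "module R M" "module R N" "lin_map R M N f"
  shows "f \<zero>\<^bsub>M\<^esub> = \<zero>\<^bsub>N\<^esub>"
proof -
  interpret M: module R M by fact
  interpret N: module R N by fact
  have "f \<zero>\<^bsub>M\<^esub> = f (\<zero>\<^bsub>R\<^esub> \<odot>\<^bsub>M\<^esub> \<zero>\<^bsub>M\<^esub>)" by simp
  also have "\<dots> = \<zero>\<^bsub>R\<^esub> \<odot>\<^bsub>N\<^esub> f \<zero>\<^bsub>M\<^esub>" by (rule lin_map_smult[OF assms(3)]) auto
  also have "\<dots> = \<zero>\<^bsub>N\<^esub>" using lin_map_closed[OF assms(3) M.zero_closed] by simp
  finally show ?thesis .
qed

lemma lin_map_finsum:
  assumes "module R M" "module R N" "lin_map R M N f" "finite A" "g \<in> A \<rightarrow> carrier M"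
  shows "f (finsum M g A) = finsum N (\<lambda>i. f (g i)) A"
  using assms(4,5)
proof (induction A rule: finite_induct)
  case empty
  interpret M: module R M by fact
  interpret N: module R N by fact
  show ?case using lin_map_zero[OF assms(1-3)] by simp
next
  case (insert x F)
  interpret M: module R M by fact
  interpret N: module R N by fact
  have "f (g x) \<in> carrier N" "(\<lambda>i. f (g i)) \<in> F \<rightarrow> carrier N"
    using insert lin_map_closed[OF assms(3)] by auto
  then show ?case using insert lin_map_add[OF assms(3)] by (simp add: M.finsum_closed)
qed

lemma carrier_free_mod:
  "f \<in> carrier (free_mod R B) \<longleftrightarrow> f \<in> B \<rightarrow>\<^sub>E carrier R \<and> finite {s\<in>B. f s \<noteq> \<zero>\<^bsub>R\<^esub>}"
  by (simp add: free_mod_def)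

lemma add_free_mod: "f \<oplus>\<^bsub>free_mod R B\<^esub> g = (\<lambda>s\<in>B. f s \<oplus>\<^bsub>R\<^esub> g s)"
  by (simp add: free_mod_def)

lemma smult_free_mod: "r \<odot>\<^bsub>free_mod R B\<^esub> f = (\<lambda>s\<in>B. r \<otimes>\<^bsub>R\<^esub> f s)"
  by (simp add: free_mod_def)

lemma zero_free_mod: "\<zero>\<^bsub>free_mod R B\<^esub> = (\<lambda>s\<in>B. \<zero>\<^bsub>R\<^esub>)"
  by (simp add: free_mod_def)

definition free_basis_vec :: "('r, 'c) ring_scheme \<Rightarrow> 's set \<Rightarrow> 's \<Rightarrow> ('s \<Rightarrow> 'r)" where
  "free_basis_vec R B a = (\<lambda>s\<in>B. if s = a then \<one>\<^bsub>R\<^esub> else \<zero>\<^bsub>R\<^esub>)"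

context cring
begin

lemma free_mod_add_closed:
  assumes "f \<in> carrier (free_mod R B)" "g \<in> carrier (free_mod R B)"
  shows "f \<oplus>\<^bsub>free_mod R B\<^esub> g \<in> carrier (free_mod R B)"
proof -
  have "{s\<in>B. f s \<oplus> g s \<noteq> \<zero>} \<subseteq> {s\<in>B. f s \<noteq> \<zero>} \<union> {s\<in>B. g s \<noteq> \<zero>}"
    using assms by (auto simp: carrier_free_mod)
  then show ?thesis using assms unfolding carrier_free_mod add_free_mod
    by (auto intro: finite_subset simp: PiE_iff)
qed

lemma free_mod_smult_closed:
  assumes "f \<in> carrier (free_mod R B)" "r \<in> carrier R"
  shows "r \<odot>\<^bsub>free_mod R B\<^esub> f \<in> carrier (free_mod R B)"
proof -
  have "{s\<in>B. r \<otimes> f s \<noteq> \<zero>} \<subseteq> {s\<in>B. f s \<noteq> \<zero>}"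
    using assms by (auto simp: carrier_free_mod)
  then show ?thesis using assms unfolding carrier_free_mod smult_free_mod
    by (auto intro: finite_subset simp: PiE_iff)
qed

lemma free_mod_zero_closed: "\<zero>\<^bsub>free_mod R B\<^esub> \<in> carrier (free_mod R B)"
  unfolding carrier_free_mod zero_free_mod by auto

lemma free_basis_vec_closed: "free_basis_vec R B a \<in> carrier (free_mod R B)"
proof -
  have "{s\<in>B. free_basis_vec R B a s \<noteq> \<zero>} \<subseteq> {a}" unfolding free_basis_vec_def by auto
  then show ?thesis
    unfolding carrier_free_mod by (auto intro: finite_subset simp: free_basis_vec_def)
qed

lemma free_mod_induct [consumes 1, case_names zero add_basis_vec]:
  assumes f: "f \<in> carrier (free_mod R B)"
    and zero: "P (\<zero>\<^bsub>free_mod R B\<^esub>)"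
    and add_basis_vec: "\<And>g a c. g \<in> carrier (free_mod R B) \<Longrightarrow> P g \<Longrightarrow> a \<in> B \<Longrightarrow> c \<in> carrier R \<Longrightarrow>
              P (g \<oplus>\<^bsub>free_mod R B\<^esub> (c \<odot>\<^bsub>free_mod R B\<^esub> free_basis_vec R B a))"
  shows "P f"
proof -
  have "\<forall>f\<in>carrier (free_mod R B). {s\<in>B. f s \<noteq> \<zero>} \<subseteq> S \<longrightarrow> P f" if "finite S" for S
    using that
  proof (induction S rule: finite_induct)
    case empty
    have "f = \<zero>\<^bsub>free_mod R B\<^esub>"
      if "f \<in> carrier (free_mod R B)" "{s \<in> B. f s \<noteq> \<zero>} \<subseteq> {}" for f
      unfolding zero_free_mod using that by (auto simp: carrier_free_mod PiE_iff extensional_def)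
    then show ?case using zero by blast
  next
    case (insert a S)
    show ?case
    proof (intro ballI impI)
      fix f assume f: "f \<in> carrier (free_mod R B)" and supp: "{s \<in> B. f s \<noteq> \<zero>} \<subseteq> insert a S"
      show "P f"
      proof (cases "a \<in> B \<and> f a \<noteq> \<zero>")
        case False
        then show ?thesis using insert.IH f supp by blast
      next
        case True
        define g where "g = (\<lambda>s\<in>B. if s = a then \<zero> else f s)"
        have fE: "f \<in> B \<rightarrow>\<^sub>E carrier R" and fin: "finite {s\<in>B. f s \<noteq> \<zero>}"
          using f by (auto simp: carrier_free_mod)
        have "{s\<in>B. g s \<noteq> \<zero>} \<subseteq> {s\<in>B. f s \<noteq> \<zero>}" unfolding g_def by auto
        then have "finite {s\<in>B. g s \<noteq> \<zero>}" using fin by (rule finite_subset)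
        then have g: "g \<in> carrier (free_mod R B)"
          unfolding carrier_free_mod using fE by (auto simp: g_def PiE_iff)
        have "{s\<in>B. g s \<noteq> \<zero>} \<subseteq> S" using supp unfolding g_def by auto
        then have "P g" using insert.IH g by blast
        have fa: "f a \<in> carrier R" using fE True by auto
        have "P (g \<oplus>\<^bsub>free_mod R B\<^esub> (f a \<odot>\<^bsub>free_mod R B\<^esub> free_basis_vec R B a))"
          using add_basis_vec[OF g \<open>P g\<close> _ fa] True by blast
        moreover have "f = g \<oplus>\<^bsub>free_mod R B\<^esub> (f a \<odot>\<^bsub>free_mod R B\<^esub> free_basis_vec R B a)"
          using fE fa True unfolding add_free_mod smult_free_mod g_def free_basis_vec_def
          by (auto simp: PiE_iff extensional_def)
        ultimately show ?thesis by simp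
      qed
    qed
  qed
  then show ?thesis using f by (auto simp: carrier_free_mod)
qed

lemma free_push_basis_vec:
  assumes "a \<in> B" "h a \<in> B'"
  shows "free_push R B B' h (free_basis_vec R B a) = free_basis_vec R B' (h a)"
proof
  fix t
  have "{s \<in> B. h s = t \<and> free_basis_vec R B a s \<noteq> \<zero>} = (if h a = t \<and> \<one> \<noteq> \<zero> then {a} else {})"
    using assms by (auto simp: free_basis_vec_def)
  then show "free_push R B B' h (free_basis_vec R B a) t = free_basis_vec R B' (h a) t"
    using assms by (auto simp: free_push_def free_basis_vec_def)
qed

lemma free_push_support_subset:
  "{t\<in>B'. free_push R B B' h f t \<noteq> \<zero>} \<subseteq> h ` {s\<in>B. f s \<noteq> \<zero>}"
proof
  define fibre where "fibre t = {s\<in>B. h s = t \<and> f s \<noteq> \<zero>}" for t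
  fix t assume "t \<in> {t\<in>B'. free_push R B B' h f t \<noteq> \<zero>}"
  then have "fibre t \<noteq> {}" unfolding free_push_def fibre_def[symmetric] by auto
  then show "t \<in> h ` {s\<in>B. f s \<noteq> \<zero>}" unfolding fibre_def by auto
qed

lemma free_push_closed:
  assumes h: "h \<in> B \<rightarrow> B'" and f: "f \<in> carrier (free_mod R B)"
  shows "free_push R B B' h f \<in> carrier (free_mod R B')"
proof -
  have "finite (h ` {s\<in>B. f s \<noteq> \<zero>})" using f by (simp add: carrier_free_mod)
  then have "finite {t\<in>B'. free_push R B B' h f t \<noteq> \<zero>}"
    by (rule finite_subset[OF free_push_support_subset])
  then show ?thesis
    using f unfolding carrier_free_mod free_push_def by (auto intro!: finsum_closed simp: PiE_iff)
qed

end

definition free_extend ::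
  "('r, 'c) ring_scheme \<Rightarrow> ('r, 'v, 'd) module_scheme \<Rightarrow> 's set \<Rightarrow> ('s \<Rightarrow> 'v) \<Rightarrow> ('s \<Rightarrow> 'r) \<Rightarrow> 'v" where
  "free_extend R M B val f = (\<Oplus>\<^bsub>M\<^esub> s\<in>{s\<in>B. f s \<noteq> \<zero>\<^bsub>R\<^esub>}. f s \<odot>\<^bsub>M\<^esub> val s)"

context module
begin

lemma finsum_smult_rdistr:
  "finite A \<Longrightarrow> g \<in> A \<rightarrow> carrier R \<Longrightarrow> v \<in> carrier M \<Longrightarrow>
    (\<Oplus>i\<in>A. g i) \<odot>\<^bsub>M\<^esub> v = (\<Oplus>\<^bsub>M\<^esub> i\<in>A. g i \<odot>\<^bsub>M\<^esub> v)"
  by (induction A rule: finite_induct) (simp_all add: smult_l_distr Pi_iff)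

lemma free_extend_eq_finsum:
  assumes "val \<in> B \<rightarrow> carrier M" "f \<in> carrier (free_mod R B)"
    and "finite S" "{s\<in>B. f s \<noteq> \<zero>} \<subseteq> S" "S \<subseteq> B"
  shows "free_extend R M B val f = (\<Oplus>\<^bsub>M\<^esub> s\<in>S. f s \<odot>\<^bsub>M\<^esub> val s)"
  unfolding free_extend_def
proof (rule M.add.finprod_mono_neutral_cong_left)
  show "(\<lambda>s. f s \<odot>\<^bsub>M\<^esub> val s) \<in> S \<rightarrow> carrier M"
    using assms by (auto simp: carrier_free_mod PiE_iff intro!: smult_closed)
qed (use assms in \<open>auto intro!: smult_l_null\<close>)

lemma free_extend_closed:
  assumes "val \<in> B \<rightarrow> carrier M" "f \<in> carrier (free_mod R B)"
  shows "free_extend R M B val f \<in> carrier M"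
  unfolding free_extend_def
  using assms by (intro M.finsum_closed) (auto simp: carrier_free_mod PiE_iff)

lemma free_extend_add:
  assumes val: "val \<in> B \<rightarrow> carrier M"
    and f: "f \<in> carrier (free_mod R B)" and g: "g \<in> carrier (free_mod R B)"
  shows "free_extend R M B val (f \<oplus>\<^bsub>free_mod R B\<^esub> g) = free_extend R M B val f \<oplus>\<^bsub>M\<^esub> free_extend R M B val g"
proof -
  define S where "S = {s\<in>B. f s \<noteq> \<zero>} \<union> {s\<in>B. g s \<noteq> \<zero>}"
  have fE: "f \<in> B \<rightarrow>\<^sub>E carrier R" and gE: "g \<in> B \<rightarrow>\<^sub>E carrier R" and S: "finite S" "S \<subseteq> B"
    using f g unfolding S_def by (auto simp: carrier_free_mod)
  have "free_extend R M B val (f \<oplus>\<^bsub>free_mod R B\<^esub> g) = (\<Oplus>\<^bsub>M\<^esub> s\<in>S. (f \<oplus>\<^bsub>free_mod R B\<^esub> g) s \<odot>\<^bsub>M\<^esub> val s)"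
    using free_mod_add_closed[OF f g] S
    by (intro free_extend_eq_finsum[OF val]) (auto simp: S_def add_free_mod)
  also have "\<dots> = (\<Oplus>\<^bsub>M\<^esub> s\<in>S. f s \<odot>\<^bsub>M\<^esub> val s \<oplus>\<^bsub>M\<^esub> g s \<odot>\<^bsub>M\<^esub> val s)"
    using S fE gE val
    by (intro M.finsum_cong') (auto simp: add_free_mod smult_l_distr PiE_iff Pi_iff subsetD)
  also have "\<dots> = (\<Oplus>\<^bsub>M\<^esub> s\<in>S. f s \<odot>\<^bsub>M\<^esub> val s) \<oplus>\<^bsub>M\<^esub> (\<Oplus>\<^bsub>M\<^esub> s\<in>S. g s \<odot>\<^bsub>M\<^esub> val s)"
    using S fE gE val by (intro M.finsum_addf) (auto simp: PiE_iff intro!: smult_closed)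
  also have "\<dots> = free_extend R M B val f \<oplus>\<^bsub>M\<^esub> free_extend R M B val g"
    using free_extend_eq_finsum[OF val f S(1) _ S(2)] free_extend_eq_finsum[OF val g S(1) _ S(2)]
    by (simp add: S_def)
  finally show ?thesis .
qed

lemma free_extend_smult:
  assumes val: "val \<in> B \<rightarrow> carrier M"
    and r: "r \<in> carrier R" and f: "f \<in> carrier (free_mod R B)"
  shows "free_extend R M B val (r \<odot>\<^bsub>free_mod R B\<^esub> f) = r \<odot>\<^bsub>M\<^esub> free_extend R M B val f"
proof -
  define S where "S = {s\<in>B. f s \<noteq> \<zero>}"
  have fE: "f \<in> B \<rightarrow>\<^sub>E carrier R" and S: "finite S" "S \<subseteq> B"
    using f unfolding S_def by (auto simp: carrier_free_mod)
  have "free_extend R M B val (r \<odot>\<^bsub>free_mod R B\<^esub> f) = (\<Oplus>\<^bsub>M\<^esub> s\<in>S. (r \<odot>\<^bsub>free_mod R B\<^esub> f) s \<odot>\<^bsub>M\<^esub> val s)"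
    using free_mod_smult_closed[OF f r] S r fE
    by (intro free_extend_eq_finsum[OF val]) (auto simp: S_def smult_free_mod PiE_iff)
  also have "\<dots> = (\<Oplus>\<^bsub>M\<^esub> s\<in>S. r \<odot>\<^bsub>M\<^esub> (f s \<odot>\<^bsub>M\<^esub> val s))"
    using S fE val r
    by (intro M.finsum_cong') (auto simp: smult_free_mod smult_assoc1 PiE_iff Pi_iff subsetD)
  also have "\<dots> = r \<odot>\<^bsub>M\<^esub> (\<Oplus>\<^bsub>M\<^esub> s\<in>S. f s \<odot>\<^bsub>M\<^esub> val s)"
    using S fE val r by (intro finsum_smult_ldistr[symmetric]) (auto simp: PiE_iff)
  also have "\<dots> = r \<odot>\<^bsub>M\<^esub> free_extend R M B val f"
    by (simp add: free_extend_def S_def)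
  finally show ?thesis .
qed

lemma lin_map_free_extend:
  "val \<in> B \<rightarrow> carrier M \<Longrightarrow> lin_map R (free_mod R B) M (free_extend R M B val)"
  unfolding lin_map_def by (simp add: free_extend_closed free_extend_add free_extend_smult)

lemma free_extend_basis_vec:
  assumes "val \<in> B \<rightarrow> carrier M" "a \<in> B"
  shows "free_extend R M B val (free_basis_vec R B a) = val a"
proof -
  have "free_extend R M B val (free_basis_vec R B a) = (\<Oplus>\<^bsub>M\<^esub> s\<in>{a}. free_basis_vec R B a s \<odot>\<^bsub>M\<^esub> val s)"
    using assms by (intro free_extend_eq_finsum free_basis_vec_closed) (auto simp: free_basis_vec_def)
  also have "\<dots> = val a" using assms by (auto simp: free_basis_vec_def Pi_iff)
  finally show ?thesis .
qed

text \<open>The coefficient of \<open>t\<close> in \<open>free_push h f\<close> is the sum of \<open>f\<close> over the fibre of \<open>h\<close> at \<open>t\<close>,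
  so the defining sum regroups by fibres.\<close>
lemma free_extend_free_push:
  assumes val': "val' \<in> B' \<rightarrow> carrier M" and h: "h \<in> B \<rightarrow> B'"
    and f: "f \<in> carrier (free_mod R B)"
  shows "free_extend R M B' val' (free_push R B B' h f)
    = (\<Oplus>\<^bsub>M\<^esub> s\<in>{s\<in>B. f s \<noteq> \<zero>}. f s \<odot>\<^bsub>M\<^esub> val' (h s))"
proof -
  define S where "S = {s\<in>B. f s \<noteq> \<zero>}"
  define fibre where "fibre t = {s\<in>B. h s = t \<and> f s \<noteq> \<zero>}" for t
  have fE: "f \<in> B \<rightarrow>\<^sub>E carrier R" and S: "finite S"
    using f by (auto simp: carrier_free_mod S_def)
  have fR: "s \<in> B \<Longrightarrow> f s \<in> carrier R" for s using fE by auto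
  have fibre_fin: "finite (fibre t)" for t
    using S by (rule finite_subset[rotated]) (auto simp: fibre_def S_def)
  have push_eq: "free_push R B B' h f = (\<lambda>t\<in>B'. \<Oplus>s\<in>fibre t. f s)"
    unfolding free_push_def fibre_def by simp
  have hS: "h ` S \<subseteq> B'" using h unfolding S_def by auto
  note supp = free_push_support_subset[of B' B h f, folded S_def]
  have "free_extend R M B' val' (free_push R B B' h f)
      = (\<Oplus>\<^bsub>M\<^esub> t\<in>h ` S. free_push R B B' h f t \<odot>\<^bsub>M\<^esub> val' t)"
    using S by (intro free_extend_eq_finsum[OF val' free_push_closed[OF h f] _ supp hS]) simp
  also have "\<dots> = (\<Oplus>\<^bsub>M\<^esub> t\<in>h ` S. (\<Oplus>\<^bsub>M\<^esub> s\<in>fibre t. f s \<odot>\<^bsub>M\<^esub> val' (h s)))"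
  proof (rule M.finsum_cong')
    fix t assume t: "t \<in> h ` S"
    then have vt: "val' t \<in> carrier M" using hS val' by auto
    have "free_push R B B' h f t \<odot>\<^bsub>M\<^esub> val' t = (\<Oplus>\<^bsub>M\<^esub> s\<in>fibre t. f s \<odot>\<^bsub>M\<^esub> val' t)"
      using t hS vt fibre_fin by (auto simp: push_eq fibre_def fR intro!: finsum_smult_rdistr)
    also have "\<dots> = (\<Oplus>\<^bsub>M\<^esub> s\<in>fibre t. f s \<odot>\<^bsub>M\<^esub> val' (h s))"
      using vt by (intro M.finsum_cong') (auto simp: fibre_def fR)
    finally show "free_push R B B' h f t \<odot>\<^bsub>M\<^esub> val' t = (\<Oplus>\<^bsub>M\<^esub> s\<in>fibre t. f s \<odot>\<^bsub>M\<^esub> val' (h s))" .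
  next
    show "(\<lambda>t. \<Oplus>\<^bsub>M\<^esub> s\<in>fibre t. f s \<odot>\<^bsub>M\<^esub> val' (h s)) \<in> h ` S \<rightarrow> carrier M"
      using h val' by (auto intro!: M.finsum_closed smult_closed simp: fibre_def fR Pi_iff)
  qed simp
  also have "\<dots> = (\<Oplus>\<^bsub>M\<^esub> s\<in>\<Union>(fibre ` h ` S). f s \<odot>\<^bsub>M\<^esub> val' (h s))"
    using S fibre_fin h val'
    by (intro M.add.finprod_UN_disjoint[symmetric])
      (auto simp: pairwise_def disjnt_def fibre_def fR Pi_iff)
  also have "\<Union>(fibre ` h ` S) = S" unfolding fibre_def S_def by auto
  finally show ?thesis unfolding S_def .
qed

end

section \<open>The category \<open>U\<G>\<close>\<close>

locale stab_groupoid =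
  fixes G :: "nat \<Rightarrow> 'g monoid" and T :: "nat \<Rightarrow> nat \<Rightarrow> 'g \<Rightarrow> 'g \<Rightarrow> 'g" and b :: "nat \<Rightarrow> nat \<Rightarrow> 'g"
  assumes stab_groupoid: "braided_stability_groupoid G T b"
begin

lemmas stab_groupoidD = stab_groupoid[unfolded braided_stability_groupoid_def]

lemma group_G: "group (G n)"
  using stab_groupoidD by (elim conjE) blast

lemmas G_one_closed = monoid.one_closed[OF group.is_monoid[OF group_G]]
lemmas G_m_closed = monoid.m_closed[OF group.is_monoid[OF group_G]]
lemmas G_r_one = monoid.r_one[OF group.is_monoid[OF group_G]]
lemmas G_l_one = monoid.l_one[OF group.is_monoid[OF group_G]]

lemma T_hom: "(\<lambda>(g, h). T m n g h) \<in> hom (G m \<times>\<times> G n) (G (m + n))"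
  using stab_groupoidD by (elim conjE) blast

lemma T_closed: "g \<in> carrier (G m) \<Longrightarrow> h \<in> carrier (G n) \<Longrightarrow> T m n g h \<in> carrier (G (m + n))"
  using T_hom unfolding hom_def by force

lemma T_one_one: "T m n \<one>\<^bsub>G m\<^esub> \<one>\<^bsub>G n\<^esub> = \<one>\<^bsub>G (m + n)\<^esub>"
proof -
  interpret group_hom "G m \<times>\<times> G n" "G (m + n)" "\<lambda>(g, h). T m n g h"
    by (intro group_hom.intro group_hom_axioms.intro DirProd_group group_G T_hom)
  show ?thesis using hom_one by simp
qed

lemma carrier_G0: "carrier (G 0) = {\<one>\<^bsub>G 0\<^esub>}"
  using stab_groupoidD by (elim conjE) blast

lemma braiding_closed: "b m n \<in> carrier (G (m + n))"
  using stab_groupoidD by (elim conjE) blast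

lemma uhomD:
  assumes "\<phi> \<in> uhom G T m n"
  shows "m \<le> n" "urep G T m n \<phi> \<in> carrier (G n)" "\<phi> = urep G T m n \<phi> <#\<^bsub>G n\<^esub> stab G T m n"
proof -
  show mn: "m \<le> n" using assms unfolding uhom_def by (auto split: if_splits)
  have "\<exists>f. f \<in> carrier (G n) \<and> \<phi> = f <#\<^bsub>G n\<^esub> stab G T m n"
    using assms mn unfolding uhom_def by auto
  from someI_ex[OF this]
  show "urep G T m n \<phi> \<in> carrier (G n)" "\<phi> = urep G T m n \<phi> <#\<^bsub>G n\<^esub> stab G T m n"
    unfolding urep_def by auto
qed

lemma uhomI: "m \<le> n \<Longrightarrow> f \<in> carrier (G n) \<Longrightarrow> f <#\<^bsub>G n\<^esub> stab G T m n \<in> uhom G T m n"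
  unfolding uhom_def by auto

lemma ucomp_uhom:
  assumes "\<phi> \<in> uhom G T l m" "\<psi> \<in> uhom G T m n"
  shows "ucomp G T l m n \<psi> \<phi> \<in> uhom G T l n"
proof -
  note \<phi> = uhomD[OF assms(1)] and \<psi> = uhomD[OF assms(2)]
  have "T (n - m) m \<one>\<^bsub>G (n - m)\<^esub> (urep G T l m \<phi>) \<in> carrier (G n)"
    using T_closed[OF G_one_closed \<phi>(2), of "n - m"] \<psi>(1) by simp
  then show ?thesis unfolding ucomp_def using \<phi> \<psi> by (intro uhomI) (auto intro: G_m_closed)
qed

lemma uid_uhom: "uid G T n \<in> uhom G T n n"
  unfolding uid_def by (intro uhomI) (auto intro: G_one_closed)

lemma uiota_uhom: "uiota G T n \<in> uhom G T 0 n"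
  unfolding uiota_def by (intro uhomI) (auto intro: G_one_closed)

lemma stab_self: "stab G T n n = {\<one>\<^bsub>G n\<^esub>}"
  unfolding stab_def using carrier_G0 T_one_one[of 0 n] by simp

lemma urep_uid: "urep G T n n (uid G T n) = \<one>\<^bsub>G n\<^esub>"
proof -
  have "uid G T n = {\<one>\<^bsub>G n\<^esub>}"
    unfolding uid_def stab_self l_coset_def using G_one_closed G_l_one by auto
  then show ?thesis
    using uhomD(2,3)[OF uid_uhom, of n] unfolding stab_self l_coset_def using G_r_one by auto
qed

lemma ucomp_uid: "\<phi> \<in> uhom G T m k \<Longrightarrow> ucomp G T m m k \<phi> (uid G T m) = \<phi>"
  using uhomD[of \<phi> m k] T_one_one[of "k - m" m] G_r_one
  unfolding ucomp_def urep_uid by simp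

lemma utens_uhom:
  assumes "\<phi>1 \<in> uhom G T a1 c1" "\<phi>2 \<in> uhom G T a2 c2"
  shows "utens G T b a1 c1 a2 c2 \<phi>1 \<phi>2 \<in> uhom G T (a1 + a2) (c1 + c2)"
proof -
  note \<phi>1 = uhomD[OF assms(1)] and \<phi>2 = uhomD[OF assms(2)]
  have "inv\<^bsub>G (a1 + (c2 - a2))\<^esub> b a1 (c2 - a2) \<in> carrier (G (a1 + (c2 - a2)))"
    using group.inv_closed[OF group_G braiding_closed] .
  moreover have "(c1 - a1) + (a1 + (c2 - a2)) + a2 = c1 + c2" using \<phi>1(1) \<phi>2(1) by simp
  ultimately
  have "T ((c1 - a1) + (a1 + (c2 - a2))) a2
        (T (c1 - a1) (a1 + (c2 - a2)) \<one>\<^bsub>G (c1 - a1)\<^esub> (inv\<^bsub>G (a1 + (c2 - a2))\<^esub> b a1 (c2 - a2)))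
        \<one>\<^bsub>G a2\<^esub> \<in> carrier (G (c1 + c2))"
    using T_closed[OF T_closed[OF G_one_closed] G_one_closed] by metis
  moreover have "T c1 c2 (urep G T a1 c1 \<phi>1) (urep G T a2 c2 \<phi>2) \<in> carrier (G (c1 + c2))"
    using T_closed \<phi>1 \<phi>2 by blast
  ultimately show ?thesis
    unfolding utens_def using \<phi>1(1) \<phi>2(1) by (intro uhomI G_m_closed) auto
qed

lemma iota_plus_id_uhom: "utens G T b 0 1 k k (uiota G T 1) (uid G T k) \<in> uhom G T k (Suc k)"
  using utens_uhom[OF uiota_uhom uid_uhom, of 1 k] by simp

lemma id_plus_uhom: "\<phi> \<in> uhom G T m k \<Longrightarrow> utens G T b 1 1 m k (uid G T 1) \<phi> \<in> uhom G T (Suc m) (Suc k)"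
  using utens_uhom[OF uid_uhom, of \<phi> m k 1] by simp

end

locale UG_module = stab_groupoid G T b
  for G :: "nat \<Rightarrow> 'g monoid" and T :: "nat \<Rightarrow> nat \<Rightarrow> 'g \<Rightarrow> 'g \<Rightarrow> 'g" and b :: "nat \<Rightarrow> nat \<Rightarrow> 'g" +
  fixes R :: "'r ring" and V :: "nat \<Rightarrow> ('r, 'v) module" and Vm :: "nat \<Rightarrow> nat \<Rightarrow> 'g set \<Rightarrow> 'v \<Rightarrow> 'v"
  assumes cring_R: "cring R"
    and ug_module: "ug_module R G T V Vm"
begin

lemma module_V: "module R (V n)"
  using ug_module unfolding ug_module_def by blast

lemma lin_map_Vm: "\<phi> \<in> uhom G T m n \<Longrightarrow> lin_map R (V m) (V n) (Vm m n \<phi>)"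
  using ug_module unfolding ug_module_def by blast

lemma Vm_uid: "x \<in> carrier (V n) \<Longrightarrow> Vm n n (uid G T n) x = x"
  using ug_module unfolding ug_module_def by blast

lemma Vm_ucomp:
  "\<phi> \<in> uhom G T l m \<Longrightarrow> \<psi> \<in> uhom G T m n \<Longrightarrow> x \<in> carrier (V l) \<Longrightarrow>
    Vm l n (ucomp G T l m n \<psi> \<phi>) x = Vm m n \<psi> (Vm l m \<phi> x)"
  using ug_module unfolding ug_module_def by blast

lemma cok_sub_subset: "cok_sub G T b V Vm k \<subseteq> carrier (V (Suc k))"
  unfolding cok_sub_def using lin_map_closed[OF lin_map_Vm[OF iota_plus_id_uhom]] by auto

lemma zero_in_cok_sub: "\<zero>\<^bsub>V (Suc k)\<^esub> \<in> cok_sub G T b V Vm k"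
proof -
  interpret module R "V k" by (rule module_V)
  have "Vm k (Suc k) (utens G T b 0 1 k k (uiota G T 1) (uid G T k)) \<zero>\<^bsub>V k\<^esub> = \<zero>\<^bsub>V (Suc k)\<^esub>"
    by (rule lin_map_zero[OF module_V module_V lin_map_Vm[OF iota_plus_id_uhom]])
  then show ?thesis unfolding cok_sub_def by force
qed

lemma cok_obj_carrier: "carrier (cok_obj G T b V Vm k) = A_RCOSETS (V (Suc k)) (cok_sub G T b V Vm k)"
  by (simp add: cok_obj_def)

lemma cok_obj_add: "C \<oplus>\<^bsub>cok_obj G T b V Vm k\<^esub> D = set_add (V (Suc k)) C D"
  by (simp add: cok_obj_def)

lemma cok_obj_smult:
  "r \<odot>\<^bsub>cok_obj G T b V Vm k\<^esub> C =
    set_add (V (Suc k)) (cok_sub G T b V Vm k) ((\<lambda>x. r \<odot>\<^bsub>V (Suc k)\<^esub> x) ` C)"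
  by (simp add: cok_obj_def)

lemma cok_obj_elem_subset:
  assumes "C \<in> carrier (cok_obj G T b V Vm k)"
  shows "C \<subseteq> carrier (V (Suc k))"
proof -
  interpret module R "V (Suc k)" by (rule module_V)
  obtain a where "a \<in> carrier (V (Suc k))" "C = a_r_coset (V (Suc k)) (cok_sub G T b V Vm k) a"
    using assms unfolding cok_obj_carrier A_RCOSETS_def' by blast
  then show ?thesis using cok_sub_subset[of k] by (auto simp: a_r_coset_def')
qed

lemma mem_own_coset:
  assumes "y \<in> carrier (V (Suc k))"
  shows "y \<in> a_r_coset (V (Suc k)) (cok_sub G T b V Vm k) y"
proof -
  interpret module R "V (Suc k)" by (rule module_V)
  show ?thesis using assms zero_in_cok_sub[of k] unfolding a_r_coset_def' by force
qed

lemma zero_smult_cok_obj_subset: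
  assumes "C \<subseteq> carrier (V (Suc k))"
  shows "\<zero>\<^bsub>R\<^esub> \<odot>\<^bsub>cok_obj G T b V Vm k\<^esub> C \<subseteq> cok_sub G T b V Vm k"
proof -
  interpret module R "V (Suc k)" by (rule module_V)
  show ?thesis
    using assms cok_sub_subset[of k] unfolding cok_obj_smult set_add_def' by (fastforce simp: subset_iff)
qed

end

section \<open>The span of the low ranks\<close>

inductive_set low_rank_span ::
  "(nat \<Rightarrow> 'g monoid) \<Rightarrow> (nat \<Rightarrow> nat \<Rightarrow> 'g \<Rightarrow> 'g \<Rightarrow> 'g) \<Rightarrow> 'r ring \<Rightarrow>
   (nat \<Rightarrow> ('r, 'v) module) \<Rightarrow> (nat \<Rightarrow> nat \<Rightarrow> 'g set \<Rightarrow> 'v \<Rightarrow> 'v) \<Rightarrow> nat \<Rightarrow> nat \<Rightarrow> 'v set"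
  for G T R V Vm d n
where
  image: "m \<le> d \<Longrightarrow> \<phi> \<in> uhom G T m n \<Longrightarrow> x \<in> carrier (V m) \<Longrightarrow> Vm m n \<phi> x \<in> low_rank_span G T R V Vm d n"
| zero: "\<zero>\<^bsub>V n\<^esub> \<in> low_rank_span G T R V Vm d n"
| add: "y \<in> low_rank_span G T R V Vm d n \<Longrightarrow> z \<in> low_rank_span G T R V Vm d n \<Longrightarrow>
    y \<oplus>\<^bsub>V n\<^esub> z \<in> low_rank_span G T R V Vm d n"
| smult: "r \<in> carrier R \<Longrightarrow> y \<in> low_rank_span G T R V Vm d n \<Longrightarrow>
    r \<odot>\<^bsub>V n\<^esub> y \<in> low_rank_span G T R V Vm d n"

context UG_module
begin

lemma low_rank_span_subset: "low_rank_span G T R V Vm d n \<subseteq> carrier (V n)"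
proof
  fix y assume "y \<in> low_rank_span G T R V Vm d n"
  then show "y \<in> carrier (V n)"
  proof (induction rule: low_rank_span.induct)
    case (image m \<phi> x)
    then show ?case using lin_map_closed[OF lin_map_Vm] by blast
  next
    case zero
    interpret module R "V n" by (rule module_V)
    show ?case by simp
  next
    case (add y z)
    interpret module R "V n" by (rule module_V)
    show ?case using add by simp
  next
    case (smult r y)
    interpret module R "V n" by (rule module_V)
    show ?case using smult by simp
  qed
qed

lemma Vm_low_rank_span:
  assumes \<psi>: "\<psi> \<in> uhom G T k n" and "y \<in> low_rank_span G T R V Vm d k"
  shows "Vm k n \<psi> y \<in> low_rank_span G T R V Vm d n"
  using assms(2)
proof (induction rule: low_rank_span.induct)
  case (image m \<phi> x)
  then show ?case
    using Vm_ucomp[OF image(2) \<psi> image(3)] ucomp_uhom[OF image(2) \<psi>] low_rank_span.image by metis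
next
  case zero
  then show ?case using lin_map_zero[OF module_V module_V lin_map_Vm[OF \<psi>]] low_rank_span.zero by metis
next
  case (add y z)
  then have "y \<in> carrier (V k)" "z \<in> carrier (V k)" using low_rank_span_subset by blast+
  then show ?case using add.IH lin_map_add[OF lin_map_Vm[OF \<psi>]] low_rank_span.add by metis
next
  case (smult r y)
  then have "y \<in> carrier (V k)" using low_rank_span_subset by blast
  then show ?case using smult lin_map_smult[OF lin_map_Vm[OF \<psi>]] low_rank_span.smult by metis
qed

lemma set_add_subset_low_rank_span:
  "A \<subseteq> low_rank_span G T R V Vm d n \<Longrightarrow> B \<subseteq> low_rank_span G T R V Vm d n \<Longrightarrow>
    set_add (V n) A B \<subseteq> low_rank_span G T R V Vm d n"
  unfolding set_add_def' by (auto intro: low_rank_span.add)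

lemma low_rank_span_of_le: "n \<le> d \<Longrightarrow> y \<in> carrier (V n) \<Longrightarrow> y \<in> low_rank_span G T R V Vm d n"
  using low_rank_span.image[OF _ uid_uhom, of n d] Vm_uid by metis

end

section \<open>Generators of the cokernel\<close>

locale coker_generated = UG_module G T b R V Vm
  for G :: "nat \<Rightarrow> 'g monoid" and T :: "nat \<Rightarrow> nat \<Rightarrow> 'g \<Rightarrow> 'g \<Rightarrow> 'g" and b :: "nat \<Rightarrow> nat \<Rightarrow> 'g"
    and R :: "'r ring" and V :: "nat \<Rightarrow> ('r, 'v) module" and Vm :: "nat \<Rightarrow> nat \<Rightarrow> 'g set \<Rightarrow> 'v \<Rightarrow> 'v" +
  fixes d :: nat and J :: "'i set" and mj :: "'i \<Rightarrow> nat" and \<eta> :: "nat \<Rightarrow> ('i \<times> 'g set \<Rightarrow> 'r) \<Rightarrow> 'v set"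
  assumes generator_rank_lt: "j \<in> J \<Longrightarrow> mj j < d"
    and lin_map_\<eta>: "lin_map R (free_mod R (gen_basis G T J mj n)) (cok_obj G T b V Vm n) (\<eta> n)"
    and \<eta>_surj: "\<eta> n ` carrier (free_mod R (gen_basis G T J mj n)) = carrier (cok_obj G T b V Vm n)"
    and \<eta>_natural: "\<psi> \<in> uhom G T n n' \<Longrightarrow> f \<in> carrier (free_mod R (gen_basis G T J mj n)) \<Longrightarrow>
      \<eta> n' (free_push R (gen_basis G T J mj n) (gen_basis G T J mj n')
        (\<lambda>(j, \<phi>). (j, ucomp G T (mj j) n n' \<psi> \<phi>)) f) = cok_mor G T b V Vm n n' \<psi> (\<eta> n f)"
begin

abbreviation basis :: "nat \<Rightarrow> ('i \<times> 'g set) set" where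
  "basis n \<equiv> gen_basis G T J mj n"

abbreviation span :: "nat \<Rightarrow> 'v set" where
  "span \<equiv> low_rank_span G T R V Vm d"

lemma \<eta>_subset: "f \<in> carrier (free_mod R (basis n)) \<Longrightarrow> \<eta> n f \<subseteq> carrier (V (Suc n))"
  using cok_obj_elem_subset lin_map_closed[OF lin_map_\<eta>] by blast

text \<open>A basis vector \<open>(j, \<phi>)\<close> in rank \<open>k\<close> is the image of \<open>(j, id)\<close> in rank \<open>mj j\<close> under \<open>\<phi>\<close>, so by
  naturality its coset consists of elements \<open>h + V(id\<^sub>1 \<oplus> \<phi>) x\<close> with \<open>h\<close> in the image of \<open>V(k)\<close>
  and \<open>x \<in> V(1 + mj j)\<close>, where \<open>1 + mj j \<le> d\<close>.\<close>
lemma \<eta>_basis_vec_subset_span: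
  assumes cok_sub_span: "cok_sub G T b V Vm k \<subseteq> span (Suc k)" and a: "a \<in> basis k"
  shows "\<eta> k (free_basis_vec R (basis k) a) \<subseteq> span (Suc k)"
proof -
  interpret R: cring R by (rule cring_R)
  obtain j \<phi> where a_eq: "a = (j, \<phi>)" and j: "j \<in> J" and \<phi>: "\<phi> \<in> uhom G T (mj j) k"
    using a unfolding gen_basis_def by auto
  define m where "m = mj j"
  define e where "e = free_basis_vec R (basis m) (j, uid G T m)"
  have e: "e \<in> carrier (free_mod R (basis m))"
    unfolding e_def by (rule R.free_basis_vec_closed)
  have "free_push R (basis m) (basis k) (\<lambda>(j', \<phi>'). (j', ucomp G T (mj j') m k \<phi> \<phi>')) e
      = free_basis_vec R (basis k) a"
    unfolding e_def using j uid_uhom a a_eq ucomp_uid[OF \<phi>]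
    by (subst R.free_push_basis_vec) (auto simp: gen_basis_def m_def)
  then have \<eta>_eq: "\<eta> k (free_basis_vec R (basis k) a) = cok_mor G T b V Vm m k \<phi> (\<eta> m e)"
    using \<eta>_natural[OF \<phi>[folded m_def] e] by simp
  show ?thesis
  proof
    fix z assume "z \<in> \<eta> k (free_basis_vec R (basis k) a)"
    then obtain x h where x: "x \<in> \<eta> m e" and h: "h \<in> cok_sub G T b V Vm k"
      and z: "z = h \<oplus>\<^bsub>V (Suc k)\<^esub> Vm (Suc m) (Suc k) (utens G T b 1 1 m k (uid G T 1) \<phi>) x"
      unfolding \<eta>_eq cok_mor_def a_r_coset_def' by auto
    have "Vm (Suc m) (Suc k) (utens G T b 1 1 m k (uid G T 1) \<phi>) x \<in> span (Suc k)"
      using generator_rank_lt[OF j] id_plus_uhom[OF \<phi>] x \<eta>_subset[OF e]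
      by (intro low_rank_span.image) (auto simp: m_def)
    then show "z \<in> span (Suc k)" using h cok_sub_span z by (auto intro: low_rank_span.add)
  qed
qed

lemma \<eta>_subset_span:
  assumes cok_sub_span: "cok_sub G T b V Vm k \<subseteq> span (Suc k)"
    and f: "f \<in> carrier (free_mod R (basis k))"
  shows "\<eta> k f \<subseteq> span (Suc k)"
proof -
  interpret R: cring R by (rule cring_R)
  show ?thesis using f
  proof (induction rule: R.free_mod_induct)
    case zero
    \<comment> \<open>\<open>cok_obj\<close> is not known to be a module, so \<open>\<eta> k 0\<close> is rewritten as \<open>0 \<cdot> \<eta> k 0\<close>.\<close>
    let ?z = "\<zero>\<^bsub>free_mod R (basis k)\<^esub>"
    have "?z = \<zero>\<^bsub>R\<^esub> \<odot>\<^bsub>free_mod R (basis k)\<^esub> ?z" unfolding smult_free_mod zero_free_mod by auto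
    then have "\<eta> k ?z = \<zero>\<^bsub>R\<^esub> \<odot>\<^bsub>cok_obj G T b V Vm k\<^esub> \<eta> k ?z"
      using lin_map_smult[OF lin_map_\<eta> R.zero_closed R.free_mod_zero_closed] by metis
    also have "\<dots> \<subseteq> cok_sub G T b V Vm k"
      using zero_smult_cok_obj_subset \<eta>_subset[OF R.free_mod_zero_closed] by blast
    finally show ?case using cok_sub_span by blast
  next
    case (add_basis_vec g a c)
    note g = add_basis_vec.hyps(1) and a = add_basis_vec.hyps(2) and c = add_basis_vec.hyps(3)
    have e: "free_basis_vec R (basis k) a \<in> carrier (free_mod R (basis k))"
      by (rule R.free_basis_vec_closed)
    have "\<eta> k (g \<oplus>\<^bsub>free_mod R (basis k)\<^esub> (c \<odot>\<^bsub>free_mod R (basis k)\<^esub> free_basis_vec R (basis k) a)) =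
        set_add (V (Suc k)) (\<eta> k g) (set_add (V (Suc k)) (cok_sub G T b V Vm k)
          ((\<lambda>x. c \<odot>\<^bsub>V (Suc k)\<^esub> x) ` \<eta> k (free_basis_vec R (basis k) a)))"
      using lin_map_add[OF lin_map_\<eta> g R.free_mod_smult_closed[OF e c]] lin_map_smult[OF lin_map_\<eta> c e]
      by (simp add: cok_obj_add cok_obj_smult)
    also have "\<dots> \<subseteq> span (Suc k)"
      using add_basis_vec.IH c cok_sub_span \<eta>_basis_vec_subset_span[OF cok_sub_span a]
      by (intro set_add_subset_low_rank_span) (auto intro: low_rank_span.smult)
    finally show ?case .
  qed
qed

text \<open>Every \<open>y \<in> V(k + 1)\<close> lies in its coset, which is a value of \<open>\<eta> k\<close>; for \<open>k \<ge> d\<close> the image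
  \<open>cok_sub\<close> of \<open>V(k)\<close> lies in the span by induction.\<close>
lemma carrier_subset_span: "carrier (V n) \<subseteq> span n"
proof (induction n rule: less_induct)
  case (less n)
  show ?case
  proof (cases "n \<le> d")
    case True
    then show ?thesis using low_rank_span_of_le by blast
  next
    case False
    then obtain k where n: "n = Suc k" by (cases n) auto
    have cok_sub_span: "cok_sub G T b V Vm k \<subseteq> span (Suc k)"
      using less[of k] n Vm_low_rank_span[OF iota_plus_id_uhom] unfolding cok_sub_def by auto
    show ?thesis
    proof
      fix y assume y: "y \<in> carrier (V n)"
      then have "a_r_coset (V (Suc k)) (cok_sub G T b V Vm k) y \<in> carrier (cok_obj G T b V Vm k)"
        unfolding cok_obj_carrier A_RCOSETS_def' n by blast
      then obtain f where f: "f \<in> carrier (free_mod R (basis k))"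
          and "\<eta> k f = a_r_coset (V (Suc k)) (cok_sub G T b V Vm k) y"
        unfolding \<eta>_surj[of k, symmetric] by blast
      then have "y \<in> \<eta> k f" using mem_own_coset y n by simp
      then show "y \<in> span n" using \<eta>_subset_span[OF cok_sub_span f] n by blast
    qed
  qed
qed

end

context UG_module
begin

lemma carrier_subset_low_rank_span_if_coker_gen_ranks:
  assumes "gen_ranks TYPE('i) R G T (cok_obj G T b V Vm) (cok_mor G T b V Vm) (int d - 1)"
  shows "carrier (V n) \<subseteq> low_rank_span G T R V Vm d n"
proof -
  obtain J :: "'i set" and mj \<eta> where "\<forall>j\<in>J. int (mj j) \<le> int d - 1"
    and "\<forall>n. lin_map R (free_mod R (gen_basis G T J mj n)) (cok_obj G T b V Vm n) (\<eta> n) \<and>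
        \<eta> n ` carrier (free_mod R (gen_basis G T J mj n)) = carrier (cok_obj G T b V Vm n)"
    and "\<forall>n n'. \<forall>\<psi>\<in>uhom G T n n'. \<forall>f\<in>carrier (free_mod R (gen_basis G T J mj n)).
        \<eta> n' (free_push R (gen_basis G T J mj n) (gen_basis G T J mj n')
          (\<lambda>(j, \<phi>). (j, ucomp G T (mj j) n n' \<psi> \<phi>)) f) = cok_mor G T b V Vm n n' \<psi> (\<eta> n f)"
    using assms unfolding gen_ranks_def by (elim exE conjE) (rule that; assumption)
  then interpret coker_generated G T b R V Vm d J mj \<eta>
    by unfold_locales force+
  show ?thesis by (rule carrier_subset_span)
qed

end

section \<open>The tautological presentation\<close>

definition low_rank_elements :: "(nat \<Rightarrow> ('r, 'v) module) \<Rightarrow> nat \<Rightarrow> (nat \<times> 'v) set" where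
  "low_rank_elements V d = {(m, x). m \<le> d \<and> x \<in> carrier (V m)}"

definition taut_map ::
  "(nat \<Rightarrow> 'g monoid) \<Rightarrow> (nat \<Rightarrow> nat \<Rightarrow> 'g \<Rightarrow> 'g \<Rightarrow> 'g) \<Rightarrow> 'r ring \<Rightarrow> (nat \<Rightarrow> ('r, 'v) module) \<Rightarrow>
   (nat \<Rightarrow> nat \<Rightarrow> 'g set \<Rightarrow> 'v \<Rightarrow> 'v) \<Rightarrow> nat \<Rightarrow> nat \<Rightarrow> ((nat \<times> 'v) \<times> 'g set \<Rightarrow> 'r) \<Rightarrow> 'v" where
  "taut_map G T R V Vm d n =
    free_extend R (V n) (gen_basis G T (low_rank_elements V d) fst n) (\<lambda>((m, x), \<phi>). Vm m n \<phi> x)"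

context UG_module
begin

abbreviation taut_basis :: "nat \<Rightarrow> nat \<Rightarrow> ((nat \<times> 'v) \<times> 'g set) set" where
  "taut_basis d n \<equiv> gen_basis G T (low_rank_elements V d) fst n"

lemma taut_value_closed: "(\<lambda>((m, x), \<phi>). Vm m n \<phi> x) \<in> taut_basis d n \<rightarrow> carrier (V n)"
  unfolding gen_basis_def low_rank_elements_def by (auto intro: lin_map_closed[OF lin_map_Vm])

lemma lin_map_taut_map: "lin_map R (free_mod R (taut_basis d n)) (V n) (taut_map G T R V Vm d n)"
  unfolding taut_map_def by (rule module.lin_map_free_extend[OF module_V taut_value_closed])

lemma low_rank_span_subset_taut_image:
  "low_rank_span G T R V Vm d n \<subseteq> taut_map G T R V Vm d n ` carrier (free_mod R (taut_basis d n))"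
proof
  interpret R: cring R by (rule cring_R)
  fix y assume "y \<in> low_rank_span G T R V Vm d n"
  then show "y \<in> taut_map G T R V Vm d n ` carrier (free_mod R (taut_basis d n))"
  proof (induction rule: low_rank_span.induct)
    case (image m \<phi> x)
    then have "((m, x), \<phi>) \<in> taut_basis d n"
      unfolding gen_basis_def low_rank_elements_def by auto
    then have "taut_map G T R V Vm d n (free_basis_vec R (taut_basis d n) ((m, x), \<phi>)) = Vm m n \<phi> x"
      unfolding taut_map_def using module.free_extend_basis_vec[OF module_V taut_value_closed] by simp
    then show ?case using R.free_basis_vec_closed by (metis rev_image_eqI)
  next
    case zero
    interpret module R "V n" by (rule module_V)
    have "taut_map G T R V Vm d n \<zero>\<^bsub>free_mod R (taut_basis d n)\<^esub> = \<zero>\<^bsub>V n\<^esub>"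
      unfolding taut_map_def free_extend_def zero_free_mod by simp
    then show ?case using R.free_mod_zero_closed by (metis rev_image_eqI)
  next
    case (add y z)
    then obtain f g where f: "f \<in> carrier (free_mod R (taut_basis d n))" "y = taut_map G T R V Vm d n f"
      and g: "g \<in> carrier (free_mod R (taut_basis d n))" "z = taut_map G T R V Vm d n g"
      by blast
    then have "taut_map G T R V Vm d n (f \<oplus>\<^bsub>free_mod R (taut_basis d n)\<^esub> g) = y \<oplus>\<^bsub>V n\<^esub> z"
      using lin_map_add[OF lin_map_taut_map] by simp
    then show ?case using R.free_mod_add_closed[OF f(1) g(1)] by (metis rev_image_eqI)
  next
    case (smult r y)
    then obtain f where f: "f \<in> carrier (free_mod R (taut_basis d n))" "y = taut_map G T R V Vm d n f"
      by blast
    then have "taut_map G T R V Vm d n (r \<odot>\<^bsub>free_mod R (taut_basis d n)\<^esub> f) = r \<odot>\<^bsub>V n\<^esub> y"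
      using lin_map_smult[OF lin_map_taut_map smult(1)] by simp
    then show ?case using R.free_mod_smult_closed[OF f(1) smult(1)] by (metis rev_image_eqI)
  qed
qed

lemma taut_map_natural:
  assumes \<psi>: "\<psi> \<in> uhom G T n n'" and f: "f \<in> carrier (free_mod R (taut_basis d n))"
  shows "taut_map G T R V Vm d n' (free_push R (taut_basis d n) (taut_basis d n')
      (\<lambda>(j, \<phi>). (j, ucomp G T (fst j) n n' \<psi> \<phi>)) f) = Vm n n' \<psi> (taut_map G T R V Vm d n f)"
proof -
  interpret M: module R "V n'" by (rule module_V)
  define val where "val k = (\<lambda>((m, x), \<phi>). Vm m k \<phi> x)" for k
  define h :: "(nat \<times> 'v) \<times> 'g set \<Rightarrow> (nat \<times> 'v) \<times> 'g set"
    where "h = (\<lambda>(j, \<phi>). (j, ucomp G T (fst j) n n' \<psi> \<phi>))"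
  define S where "S = {s\<in>taut_basis d n. f s \<noteq> \<zero>\<^bsub>R\<^esub>}"
  have fE: "f \<in> taut_basis d n \<rightarrow>\<^sub>E carrier R" and S: "finite S"
    using f by (auto simp: carrier_free_mod S_def)
  have h: "h \<in> taut_basis d n \<rightarrow> taut_basis d n'"
    using ucomp_uhom \<psi> by (auto simp: gen_basis_def h_def)
  have val_n: "val n s \<in> carrier (V n)" if "s \<in> taut_basis d n" for s
    using taut_value_closed that unfolding val_def by blast
  have terms_closed: "(\<lambda>s. f s \<odot>\<^bsub>V n\<^esub> val n s) \<in> S \<rightarrow> carrier (V n)"
    using fE val_n module.smult_closed[OF module_V] by (auto simp: S_def PiE_iff)
  have "taut_map G T R V Vm d n' (free_push R (taut_basis d n) (taut_basis d n') h f)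
      = (\<Oplus>\<^bsub>V n'\<^esub> s\<in>S. f s \<odot>\<^bsub>V n'\<^esub> val n' (h s))"
    unfolding taut_map_def S_def val_def[symmetric]
    by (rule M.free_extend_free_push[OF taut_value_closed[folded val_def] h f])
  also have "\<dots> = (\<Oplus>\<^bsub>V n'\<^esub> s\<in>S. Vm n n' \<psi> (f s \<odot>\<^bsub>V n\<^esub> val n s))"
  proof (rule M.finsum_cong')
    fix s assume s: "s \<in> S"
    then obtain m x \<phi> where s_eq: "s = ((m, x), \<phi>)" and x: "x \<in> carrier (V m)" and \<phi>: "\<phi> \<in> uhom G T m n"
      unfolding S_def gen_basis_def low_rank_elements_def by auto
    have "val n' (h s) = Vm n n' \<psi> (val n s)"
      using Vm_ucomp[OF \<phi> \<psi> x] s_eq by (simp add: val_def h_def)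
    moreover have "f s \<in> carrier R" "val n s \<in> carrier (V n)"
      using fE s val_n unfolding S_def by auto
    ultimately show "f s \<odot>\<^bsub>V n'\<^esub> val n' (h s) = Vm n n' \<psi> (f s \<odot>\<^bsub>V n\<^esub> val n s)"
      using lin_map_smult[OF lin_map_Vm[OF \<psi>]] by simp
  next
    show "(\<lambda>s. Vm n n' \<psi> (f s \<odot>\<^bsub>V n\<^esub> val n s)) \<in> S \<rightarrow> carrier (V n')"
      using terms_closed lin_map_closed[OF lin_map_Vm[OF \<psi>]] by auto
  qed simp
  also have "\<dots> = Vm n n' \<psi> (taut_map G T R V Vm d n f)"
    unfolding taut_map_def free_extend_def S_def[symmetric] val_def[symmetric]
    using lin_map_finsum[OF module_V module_V lin_map_Vm[OF \<psi>] S terms_closed] by simp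
  finally show ?thesis unfolding h_def .
qed

lemma gen_ranks_if_low_rank_span:
  assumes "\<And>n. carrier (V n) \<subseteq> low_rank_span G T R V Vm d n"
  shows "gen_ranks TYPE(nat \<times> 'v) R G T V Vm (int d)"
  unfolding gen_ranks_def
proof (intro exI[of _ "low_rank_elements V d"] exI[of _ fst] exI[of _ "taut_map G T R V Vm d"]
    conjI allI ballI)
  show "int (fst j) \<le> int d" if "j \<in> low_rank_elements V d" for j
    using that unfolding low_rank_elements_def by auto
  show "taut_map G T R V Vm d n ` carrier (free_mod R (taut_basis d n)) = carrier (V n)" for n
    using assms[of n] low_rank_span_subset_taut_image lin_map_closed[OF lin_map_taut_map] by blast
qed (simp_all add: lin_map_taut_map taut_map_natural)

end

theorem proposition7p5:
  fixes G :: "nat \<Rightarrow> 'g monoid" and T :: "nat \<Rightarrow> nat \<Rightarrow> 'g \<Rightarrow> 'g \<Rightarrow> 'g" and b :: "nat \<Rightarrow> nat \<Rightarrow> 'g"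
    and R :: "'r ring" and V :: "nat \<Rightarrow> ('r, 'v) module" and Vm :: "nat \<Rightarrow> nat \<Rightarrow> 'g set \<Rightarrow> 'v \<Rightarrow> 'v"
    and d :: nat
  assumes "braided_stability_groupoid G T b"
    and "cring R"
    and "ug_module R G T V Vm"
    and "gen_ranks TYPE('i) R G T (cok_obj G T b V Vm) (cok_mor G T b V Vm) (int d - 1)"
  shows "gen_ranks TYPE(nat \<times> 'v) R G T V Vm (int d)"
proof -
  interpret UG_module G T b R V Vm
    using assms(1-3) unfolding UG_module_def UG_module_axioms_def stab_groupoid_def by blast
  show ?thesis
    using gen_ranks_if_low_rank_span carrier_subset_low_rank_span_if_coker_gen_ranks[OF assms(4)] .
qed
end
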